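(* Let $n>4$, let $k$ be a divisor of $n$ with $1<k\le n/2$, write $n=km$, let $G\in\{\mathrm{Sym}(n),\mathrm{Alt}(n)\}$, and let $\Omega$ be the set of partitions of $\{1,\dots,n\}$ into $m$ parts of size $k$, with the natural action of $G$. Then $G$ contains an element of prime order $p$ that is quasi-semiregular on $\Omega$ if and only if $p$ is odd, $k=p$ and $2\le m\le p$. Moreover, if $g$ is a quasi-semiregular element of prime order $p$ and $\Gamma=\{\Gamma_1,\dots,\Gamma_m\}$ is the unique $g$-invariant partition in $\Omega$, then $g\in\mathrm{Alt}(n)$, $g$ fixes each $\Gamma_i$ setwise, and either (1) $m=p$ and $g$ lies in the unique $G$-conjugacy class of elements of cycle type $1^pp^{m-1}$; or (2) $2\le m<p$ and $g$ lies in one of two $G$-conjugacy classes, namely the elements of cycle type $1^pp^{m-1}$ or those of cycle type $p^m$.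
   Context: A permutation $g$ is quasi-semiregular if $\langle g\rangle$ has a unique fixed point and acts semiregularly (only the identity fixes a point) on the remaining points. *)

theory Defs
  imports "HOL-Combinatorics.Combinatorics" "HOL-Library.Disjoint_Sets" "HOL-Library.Multiset"
    "HOL-Computational_Algebra.Primes"
begin

definition sym_grp :: "nat \<Rightarrow> (nat \<Rightarrow> nat) set" where
  "sym_grp n = {g. g permutes {1..n}}"

definition alt_grp :: "nat \<Rightarrow> (nat \<Rightarrow> nat) set" where
  "alt_grp n = {g. g permutes {1..n} \<and> evenperm g}"

definition uniform_partitions :: "nat \<Rightarrow> nat \<Rightarrow> nat \<Rightarrow> nat set set set" where
  "uniform_partitions n k m =
     {P. partition_on {1..n} P \<and> card P = m \<and> (\<forall>B\<in>P. card B = k)}"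

definition set_act :: "(nat \<Rightarrow> nat) \<Rightarrow> nat set set \<Rightarrow> nat set set" where
  "set_act g P = (\<lambda>B. g ` B) ` P"

definition quasi_semiregular :: "'b set \<Rightarrow> ('b \<Rightarrow> 'b) \<Rightarrow> bool" where
  "quasi_semiregular X f \<longleftrightarrow>
     (\<exists>!x. x \<in> X \<and> (\<forall>j. (f ^^ j) x = x)) \<and>
     (\<forall>j. \<forall>x\<in>X. (f ^^ j) x = x \<and> \<not> (\<forall>i. (f ^^ i) x = x) \<longrightarrow> (\<forall>y\<in>X. (f ^^ j) y = y))"

definition cycle_type :: "('a \<Rightarrow> 'a) \<Rightarrow> 'a set \<Rightarrow> nat multiset" where
  "cycle_type g A = image_mset card (mset_set {orbit g x | x. x \<in> A})"

end

theory Submission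
  imports Defs
begin

(*
  Since g has prime order p, it is quasi-semiregular on the set of uniform partitions exactly
  when it fixes a unique such partition Gamma.  Any permutation commuting with g maps Gamma to
  a g-invariant partition, hence fixes Gamma.  Applied to the rotation of a single p-cycle, to
  a transposition of two fixed points and to a swap of two p-cycles, this shows that the blocks
  of Gamma are g-invariant, that the fixed points lie in one block, and that a block containing
  a moved point is a single p-cycle as soon as another block contains a moved point.  Two
  relabellings that do not commute with g, but still produce g-invariant partitions, finish the
  classification: exchanging p fixed points with a p-cycle forces k = p, and transposing a
  p x p array whose rows are p cycles shows that fewer than p cycles are blocks.  So g has
  cycle type 1^p p^(m-1) with m <= p, or p^m with m < p; conversely, for such an element the
  fixed points together with the cycles form the only invariant partition.  Odd prime order
  makes g even, and elements of equal cycle type are conjugate in Sym(n), and in Alt(n) as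
  well, since a transposition of two fixed points or a swap of two p-cycles is an odd
  permutation commuting with g.
*)

section \<open>Permutations and their parity\<close>

lemma funpow_fixpoint: "f x = x \<Longrightarrow> (f ^^ n) x = x"
  by (induction n) auto

lemma image_eq_self_if_fixed: "(\<And>x. x \<in> A \<Longrightarrow> f x = x) \<Longrightarrow> f ` A = A"
  by (metis image_cong image_ident)

lemma card_ge_2_obtain_other:
  assumes "2 \<le> card A" obtains y where "y \<in> A" "y \<noteq> x"
proof -
  have "\<not> A \<subseteq> {x}"
  proof
    assume "A \<subseteq> {x}"
    then have "card A \<le> 1" using card_mono[of "{x}" A] by simp
    with assms show False by simp
  qed
  then show ?thesis using that by blast
qed

lemma prime_order_fixpoint:
  assumes "prime p" "(f ^^ p) x = x" "(f ^^ d) x = x" "\<not> p dvd d"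
  shows "f x = x"
proof -
  have "least_power f x dvd p" "least_power f x dvd d"
    using assms(2,3) by (auto intro: least_power_minimal)
  then have "least_power f x = 1"
    using assms(1,4) by (metis prime_nat_iff)
  then show ?thesis
    using least_powerI(1)[OF assms(2) prime_gt_0_nat[OF assms(1)]] by simp
qed

lemma evenperm_funpow:
  assumes "permutation g" shows "evenperm (g ^^ j) \<longleftrightarrow> even j \<or> evenperm g"
proof (induction j)
  case (Suc j)
  have "evenperm (g ^^ Suc j) \<longleftrightarrow> evenperm g = evenperm (g ^^ j)"
    using evenperm_comp[OF assms permutation_funpow[OF assms]] by (simp only: funpow.simps(2))
  then show ?case using Suc.IH even_Suc[of j] by blast
qed simp

lemma evenperm_if_odd_order:
  assumes "permutation g" "g ^^ p = id" "odd p" shows "evenperm g"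
  using evenperm_funpow[OF assms(1), of p] assms(2,3) by simp

lemma funpow_card_orbit:
  assumes "permutation f" shows "(f ^^ card (orbit f x)) x = x"
proof -
  have x: "x \<in> orbit f x" using assms by (rule permutation_self_in_orbit)
  have "card (orbit f x) = funpow_dist1 f x x"
    unfolding orbit_conv_funpow_dist1[OF x] card_image[OF inj_on_funpow_dist1[OF x]] by simp
  then show ?thesis using funpow_dist1_prop[OF x] by simp
qed

lemma quasi_semiregular_iff_unique_fixed_point:
  assumes "prime p" "f ^^ p = id"
  shows "quasi_semiregular X f \<longleftrightarrow> (\<exists>!x. x \<in> X \<and> f x = x)"
proof -
  have fixed_by_all: "(\<forall>j. (f ^^ j) x = x) \<longleftrightarrow> f x = x" for x
    using funpow_fixpoint[of f x] by (metis One_nat_def funpow.simps comp_id)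
  have "(f ^^ j) y = y" if "(f ^^ j) x = x" "f x \<noteq> x" for j x y
  proof -
    have "p dvd j" using prime_order_fixpoint[OF assms(1) _ that(1)] assms(2) that(2) by auto
    then show ?thesis using assms(2) by (auto elim!: dvdE simp flip: funpow_mult)
  qed
  then show ?thesis unfolding quasi_semiregular_def fixed_by_all by blast
qed

primrec swaps :: "(nat \<Rightarrow> 'a) \<Rightarrow> (nat \<Rightarrow> 'a) \<Rightarrow> nat \<Rightarrow> 'a \<Rightarrow> 'a" where
  "swaps u v 0 = id"
| "swaps u v (Suc j) = transpose (u j) (v j) \<circ> swaps u v j"

lemma swaps_commute: "swaps u v j = swaps v u j"
  by (induction j) (simp_all add: transpose_commute)

lemma swaps_apply_other:
  "x \<notin> u ` {..<j} \<Longrightarrow> x \<notin> v ` {..<j} \<Longrightarrow> swaps u v j x = x"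
  by (induction j) (simp_all add: lessThan_Suc)

lemma swaps_apply:
  assumes "inj_on u {..<j}" "inj_on v {..<j}" "u ` {..<j} \<inter> v ` {..<j} = {}" "i < j"
  shows "swaps u v j (u i) = v i"
  using assms
proof (induction j)
  case (Suc j)
  have hyps: "inj_on u {..<j}" "inj_on v {..<j}" "u ` {..<j} \<inter> v ` {..<j} = {}"
    using Suc.prems(1-3) unfolding lessThan_Suc by auto
  have uj: "u j \<notin> u ` {..<j}" "u j \<notin> v ` {..<j}"
    using Suc.prems(3) by (auto simp: inj_on_image_mem_iff[OF Suc.prems(1)])
  show ?case
  proof (cases "i = j")
    case True
    then show ?thesis using swaps_apply_other[OF uj(1,2)] by simp
  next
    case False
    then have "i < j" using Suc.prems(4) by simp
    moreover have "v i \<noteq> u j"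
      using Suc.prems(3) \<open>i < j\<close> by (blast intro: less_SucI)
    moreover have "v i \<noteq> v j"
      using inj_onD[OF Suc.prems(2), of i j] \<open>i < j\<close> by auto
    ultimately show ?thesis using Suc.IH[OF hyps] by simp
  qed
qed simp

lemma swaps_image:
  assumes "inj_on u {..<j}" "inj_on v {..<j}" "u ` {..<j} \<inter> v ` {..<j} = {}"
  shows "swaps u v j ` u ` {..<j} = v ` {..<j}"
  using swaps_apply[OF assms] by (force simp: image_image)

lemma swaps_permutes:
  "(\<And>i. i < j \<Longrightarrow> u i \<in> S \<and> v i \<in> S) \<Longrightarrow> swaps u v j permutes S"
  by (induction j) (auto intro: permutes_compose permutes_swap_id)

lemma evenperm_swaps:
  "(\<And>i. i < j \<Longrightarrow> u i \<noteq> v i) \<Longrightarrow> evenperm (swaps u v j) \<longleftrightarrow> even j"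
proof (induction j)
  case (Suc j)
  have IH: "evenperm (swaps u v j) \<longleftrightarrow> even j" using Suc by simp
  have "permutation (swaps u v j)"
    by (induction j)
      (simp_all only: swaps.simps permutation_id permutation_compose permutation_swap_id)
  then have "evenperm (transpose (u j) (v j) \<circ> swaps u v j) \<longleftrightarrow>
      evenperm (transpose (u j) (v j)) = evenperm (swaps u v j)"
    by (rule evenperm_comp[OF permutation_swap_id])
  moreover have "\<not> evenperm (transpose (u j) (v j))"
    using Suc.prems[of j] by (simp add: evenperm_swap)
  ultimately show ?case using IH even_Suc[of j] by (simp only: swaps.simps) blast
qed simp

lemma exchange_permutation:
  assumes "finite S" "card A = card B" "A \<inter> B = {}" "A \<subseteq> S" "B \<subseteq> S"
  obtains c where "c permutes S" "c ` A = B" "c ` B = A" "\<And>x. x \<notin> A \<Longrightarrow> x \<notin> B \<Longrightarrow> c x = x"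
proof -
  have "finite A" "finite B" using assms(1,4,5) finite_subset by auto
  obtain u where u: "bij_betw u {..<card A} A"
    using ex_bij_betw_nat_finite[OF \<open>finite A\<close>] by (auto simp: atLeast0LessThan)
  obtain v where v: "bij_betw v {..<card A} B"
    using ex_bij_betw_nat_finite[OF \<open>finite B\<close>] assms(2) by (auto simp: atLeast0LessThan)
  let ?c = "swaps u v (card A)"
  have inj: "inj_on u {..<card A}" "inj_on v {..<card A}"
    using u v by (auto simp: bij_betw_def)
  have img: "u ` {..<card A} = A" "v ` {..<card A} = B"
    using u v by (auto simp: bij_betw_def)
  have disj: "u ` {..<card A} \<inter> v ` {..<card A} = {}" using img assms(3) by simp
  show ?thesis
  proof
    show "?c permutes S"
      using img assms(4,5) by (intro swaps_permutes) auto
    show "?c ` A = B" using swaps_image[OF inj disj] img by simp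
    have "v ` {..<card A} \<inter> u ` {..<card A} = {}" using disj by blast
    then show "?c ` B = A"
      using swaps_image[OF inj(2,1)] img by (simp add: swaps_commute[of u])
    show "?c x = x" if "x \<notin> A" "x \<notin> B" for x
      using that img swaps_apply_other by metis
  qed
qed

lemma transpose_grid_permutation:
  fixes q :: nat
  assumes "bij_betw grid ({..<q} \<times> {..<q}) U" "U \<subseteq> S"
  obtains c where "c permutes S" "\<And>i j. i < q \<Longrightarrow> j < q \<Longrightarrow> c (grid (i, j)) = grid (j, i)"
    "\<And>x. x \<notin> U \<Longrightarrow> c x = x"
proof
  let ?D = "{..<q} \<times> {..<q}"
  let ?\<tau> = "\<lambda>x. if x \<in> ?D then prod.swap x else x"
  let ?c = "\<lambda>x. if x \<in> U then grid (?\<tau> (inv_into ?D grid x)) else x"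
  have "?\<tau> permutes ?D"
    by (rule inj_imp_permutes) (auto simp: inj_on_def finite_cartesian_product)
  then have "?c permutes U" using assms(1) by (rule permutes_bij_inv_into)
  then show "?c permutes S" using assms(2) by (rule permutes_subset)
  show "?c (grid (i, j)) = grid (j, i)" if "i < q" "j < q" for i j
    using that assms(1) bij_betwE[OF assms(1)] by (simp add: bij_betw_inv_into_left)
  show "?c x = x" if "x \<notin> U" for x using that by simp
qed

section \<open>Permutations of prime order\<close>

definition fixed_points :: "('a \<Rightarrow> 'a) \<Rightarrow> 'a set \<Rightarrow> 'a set" where
  "fixed_points g S = {x \<in> S. g x = x}"

definition cycles_of :: "('a \<Rightarrow> 'a) \<Rightarrow> 'a set \<Rightarrow> 'a set set" where
  "cycles_of g S = {orbit g x | x. x \<in> S \<and> g x \<noteq> x}"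

locale prime_order_perm =
  fixes g :: "'a \<Rightarrow> 'a" and p :: nat and S :: "'a set"
  assumes g_permutes: "g permutes S" and finite_S: "finite S" and prime_p: "prime p"
    and g_order: "g ^^ p = id"
begin

lemma p_gt_1: "1 < p"
  using prime_p prime_gt_1_nat by blast

lemma permutation_g: "permutation g"
  by (rule permutes_imp_permutation[OF finite_S g_permutes])

lemma inj_g: "inj g"
  using g_permutes permutes_inj by blast

lemma funpow_mod_order: "(g ^^ (i mod p)) x = (g ^^ i) x"
  by (rule funpow_mod_eq) (simp add: g_order)

lemma funpow_in_S: "(g ^^ i) x \<in> S \<longleftrightarrow> x \<in> S"
  by (rule permutes_in_image[OF permutes_funpow[OF g_permutes]])

lemma orbit_eq_image: "orbit g x = (\<lambda>i. (g ^^ i) x) ` {..<p}"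
  using orbit_altdef_bounded[where f=g and n=p and s=x] g_order p_gt_1 by auto

lemma orbit_eq_range: "orbit g x = range (\<lambda>i. (g ^^ i) x)"
  using orbit_altdef_permutation[OF permutation_g] by auto

lemma funpow_in_orbit_self: "(g ^^ i) x \<in> orbit g x"
  unfolding orbit_eq_range by blast

lemma self_in_orbit: "x \<in> orbit g x"
  by (rule permutation_self_in_orbit[OF permutation_g])

lemma orbit_eq_if_mem: "y \<in> orbit g x \<Longrightarrow> orbit g y = orbit g x"
  using orbit_cyclic_eq3[OF cyclic_on_orbit'[OF permutation_g]] by blast

lemma image_orbit: "g ` orbit g x = orbit g x"
  using orbit_inverse[where g=g and g'=g and f=g and a=x, OF self_in_orbit]
    permutation_orbit_step[OF permutation_g] by simp

lemma orbit_subset: "x \<in> S \<Longrightarrow> orbit g x \<subseteq> S"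
  by (rule permutes_orbit_subset[OF g_permutes])

lemma orbit_fixed: "g x = x \<Longrightarrow> orbit g x = {x}"
  by (simp add: orbit_eq_singleton_iff)

lemma inj_on_funpow: assumes "g x \<noteq> x" shows "inj_on (\<lambda>i. (g ^^ i) x) {..<p}"
proof (rule inj_onI)
  have "i = j" if "i < j" "j < p" "(g ^^ i) x = (g ^^ j) x" for i j
  proof -
    have "(g ^^ (j - i)) x = x" using funpow_diff[OF inj_g] that by simp
    moreover have "\<not> p dvd (j - i)" using that by (auto dest: dvd_imp_le)
    ultimately show ?thesis
      using prime_order_fixpoint[OF prime_p] assms g_order by (metis id_apply)
  qed
  then show "i = j" if "i \<in> {..<p}" "j \<in> {..<p}" "(g ^^ i) x = (g ^^ j) x" for i j
    using that by (metis lessThan_iff linorder_neqE_nat)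
qed

lemma card_orbit: "g x \<noteq> x \<Longrightarrow> card (orbit g x) = p"
  unfolding orbit_eq_image by (simp add: card_image inj_on_funpow)

lemma nonfixed_in_orbit: assumes "g x \<noteq> x" "y \<in> orbit g x" shows "g y \<noteq> y"
proof
  assume "g y = y"
  then have "orbit g x = {y}" using orbit_eq_if_mem[OF assms(2)] orbit_fixed by simp
  then show False using card_orbit[OF assms(1)] p_gt_1 by simp
qed

lemma notin_orbit_step: "y \<notin> orbit g x \<Longrightarrow> g y \<notin> orbit g x"
  using orbit_eq_if_mem permutation_orbit_step[OF permutation_g] self_in_orbit by metis

lemma orbit_subset_if_invariant:
  assumes "g ` B = B" "x \<in> B" shows "orbit g x \<subseteq> B"
proof -
  have "(g ^^ i) ` B = B" for i
  proof (induction i)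
    case (Suc i)
    have "(g ^^ Suc i) ` B = g ` (g ^^ i) ` B" by (simp add: image_comp)
    then show ?case using Suc assms(1) by simp
  qed simp
  then show ?thesis unfolding orbit_eq_range using assms(2) by blast
qed

lemma transpose_fixed_points_commute:
  assumes "g x = x" "g y = y" shows "transpose x y \<circ> g = g \<circ> transpose x y"
proof
  fix z
  have "g z \<noteq> x" "g z \<noteq> y" if "z \<noteq> x" "z \<noteq> y"
    using that assms inj_g by (metis injD)+
  then show "(transpose x y \<circ> g) z = (g \<circ> transpose x y) z"
    using assms by (cases "z = x \<or> z = y") (auto simp: transpose_def)
qed

lemma cycles_ofE:
  assumes "C \<in> cycles_of g S" obtains x where "x \<in> S" "g x \<noteq> x" "C = orbit g x"
  using assms unfolding cycles_of_def by blast

lemma orbit_in_cycles_of: "x \<in> S \<Longrightarrow> g x \<noteq> x \<Longrightarrow> orbit g x \<in> cycles_of g S"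
  unfolding cycles_of_def by blast

lemma cycle_subset: "C \<in> cycles_of g S \<Longrightarrow> C \<subseteq> S"
  by (metis cycles_ofE orbit_subset)

lemma card_cycle: "C \<in> cycles_of g S \<Longrightarrow> card C = p"
  by (metis cycles_ofE card_orbit)

lemma image_cycle: "C \<in> cycles_of g S \<Longrightarrow> g ` C = C"
  by (metis cycles_ofE image_orbit)

lemma nonfixed_in_cycle: "C \<in> cycles_of g S \<Longrightarrow> x \<in> C \<Longrightarrow> g x \<noteq> x"
  by (metis cycles_ofE nonfixed_in_orbit)

lemma cycle_eq_orbit: "C \<in> cycles_of g S \<Longrightarrow> x \<in> C \<Longrightarrow> C = orbit g x"
  by (metis cycles_ofE orbit_eq_if_mem)

lemma cycle_disjoint_fixed_points: "C \<in> cycles_of g S \<Longrightarrow> C \<inter> fixed_points g S = {}"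
  unfolding fixed_points_def using nonfixed_in_cycle by blast

lemma cycles_eq_if_common:
  "C \<in> cycles_of g S \<Longrightarrow> C' \<in> cycles_of g S \<Longrightarrow> x \<in> C \<Longrightarrow> x \<in> C' \<Longrightarrow> C = C'"
  using cycle_eq_orbit by blast

lemma disjoint_cycles: "disjoint (cycles_of g S)"
  by (rule pairwiseI) (metis cycle_eq_orbit disjnt_def disjoint_iff)

lemma fixed_points_disjoint_cycles: "fixed_points g S \<inter> \<Union>(cycles_of g S) = {}"
  using cycle_disjoint_fixed_points by blast

lemma finite_cycles: "finite (cycles_of g S)"
  using finite_S cycle_subset by (blast intro: finite_subset[of _ "Pow S"])

lemma finite_fixed_points: "finite (fixed_points g S)"
  unfolding fixed_points_def using finite_S by simp

lemma fixed_points_Un_cycles: "S = fixed_points g S \<union> \<Union>(cycles_of g S)"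
  unfolding fixed_points_def using cycle_subset orbit_in_cycles_of self_in_orbit by blast

lemma card_eq_fixed_points_cycles:
  "card S = card (fixed_points g S) + p * card (cycles_of g S)"
proof -
  have "card (\<Union>(cycles_of g S)) = p * card (cycles_of g S)"
    using card_Union_disjoint[OF disjoint_cycles] finite_S cycle_subset card_cycle
    by (simp add: mult.commute) (meson finite_subset)
  then show ?thesis
    using fixed_points_Un_cycles fixed_points_disjoint_cycles card_Un_disjoint finite_S
    by (metis finite_Un)
qed

lemma cycle_type_eq:
  "cycle_type g S =
    replicate_mset (card (fixed_points g S)) 1 + replicate_mset (card (cycles_of g S)) p"
proof -
  have orbits: "{orbit g x | x. x \<in> S} = (\<lambda>x. {x}) ` fixed_points g S \<union> cycles_of g S"
    unfolding fixed_points_def cycles_of_def using orbit_fixed by auto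
  have "(\<lambda>x. {x}) ` fixed_points g S \<inter> cycles_of g S = {}"
    using cycle_disjoint_fixed_points by fastforce
  then have "mset_set {orbit g x | x. x \<in> S} =
      image_mset (\<lambda>x. {x}) (mset_set (fixed_points g S)) + mset_set (cycles_of g S)"
    unfolding orbits using finite_fixed_points finite_cycles
    by (simp add: mset_set_Union image_mset_mset_set inj_on_def)
  moreover have "image_mset card (mset_set (cycles_of g S)) =
      image_mset (\<lambda>_. p) (mset_set (cycles_of g S))"
    using card_cycle finite_cycles by (intro image_mset_cong) simp
  ultimately show ?thesis
    unfolding cycle_type_def by (simp add: multiset.map_comp comp_def image_mset_const_eq)
qed

lemma orbits_disjoint: "b \<notin> orbit g a \<Longrightarrow> orbit g a \<inter> orbit g b = {}"
  using orbit_eq_if_mem self_in_orbit by blast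

lemma commute_orbit_rotation:
  assumes "x \<in> S"
  obtains c where "c permutes S" "c \<circ> g = g \<circ> c" "c x = g x" "\<And>y. y \<notin> orbit g x \<Longrightarrow> c y = y"
proof
  let ?c = "perm_restrict g (orbit g x)"
  have "bij_betw g (orbit g x) (orbit g x)"
    unfolding bij_betw_def using image_orbit inj_on_subset[OF inj_g subset_UNIV] by blast
  then have "bij_betw ?c (orbit g x) (orbit g x)"
    by (rule bij_betw_cong[THEN iffD1, rotated]) (simp add: perm_restrict_simps)
  then have "?c permutes orbit g x"
    by (rule bij_imp_permutes) (simp add: perm_restrict_simps)
  then show "?c permutes S" using orbit_subset[OF assms] by (rule permutes_subset)
  show "?c \<circ> g = g \<circ> ?c"
  proof
    fix y
    show "(?c \<circ> g) y = (g \<circ> ?c) y"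
    proof (cases "y \<in> orbit g x")
      case True
      then have "g y \<in> orbit g x" using image_orbit by blast
      then show ?thesis using True by (simp add: perm_restrict_simps)
    next
      case False
      then show ?thesis using notin_orbit_step[OF False] by (simp add: perm_restrict_simps)
    qed
  qed
  show "?c x = g x" using self_in_orbit by (simp add: perm_restrict_simps)
  show "?c y = y" if "y \<notin> orbit g x" for y using that by (simp add: perm_restrict_simps)
qed

lemma commute_orbit_swap:
  assumes "a \<in> S" "b \<in> S" "g a \<noteq> a" "g b \<noteq> b" "b \<notin> orbit g a"
  obtains c where "c permutes S" "c \<circ> g = g \<circ> c" "c ` orbit g a = orbit g b"
    "\<And>x. x \<notin> orbit g a \<Longrightarrow> x \<notin> orbit g b \<Longrightarrow> c x = x" "odd p \<Longrightarrow> \<not> evenperm c"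
proof
  let ?u = "\<lambda>i. (g ^^ i) a" and ?v = "\<lambda>i. (g ^^ i) b"
  let ?c = "swaps ?u ?v p"
  have inj: "inj_on ?u {..<p}" "inj_on ?v {..<p}"
    using inj_on_funpow assms(3,4) by blast+
  have disj: "?u ` {..<p} \<inter> ?v ` {..<p} = {}"
    using orbits_disjoint[OF assms(5)] unfolding orbit_eq_image .
  have apply_u: "?c (?u i) = ?v i" for i
    using swaps_apply[OF inj disj, of "i mod p"] p_gt_1 by (simp add: funpow_mod_order)
  have "?v ` {..<p} \<inter> ?u ` {..<p} = {}"
    using disj by blast
  then have apply_v: "?c (?v i) = ?u i" for i
    using swaps_apply[OF inj(2,1), of "i mod p"] p_gt_1
    unfolding swaps_commute[of ?u] by (simp add: funpow_mod_order)
  show "?c permutes S"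
    using assms(1,2) funpow_in_S by (intro swaps_permutes) blast
  show "?c ` orbit g a = orbit g b"
    using swaps_image[OF inj disj] unfolding orbit_eq_image .
  show other: "?c x = x" if "x \<notin> orbit g a" "x \<notin> orbit g b" for x
    using that unfolding orbit_eq_image by (rule swaps_apply_other)
  show "?c \<circ> g = g \<circ> ?c"
  proof
    fix x
    consider i where "x = ?u i" | i where "x = ?v i" | "x \<notin> orbit g a" "x \<notin> orbit g b"
      unfolding orbit_eq_range by blast
    then show "(?c \<circ> g) x = (g \<circ> ?c) x"
    proof cases
      case (1 i)
      then show ?thesis using apply_u[of "Suc i"] apply_u[of i] by simp
    next
      case (2 i)
      then show ?thesis using apply_v[of "Suc i"] apply_v[of i] by simp
    next
      case 3
      then show ?thesis using other notin_orbit_step by simp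
    qed
  qed
  show "\<not> evenperm ?c" if "odd p"
    using evenperm_swaps[of p ?u ?v] disj that by blast
qed

lemma odd_commuting_perm:
  assumes "odd p" "2 \<le> card (fixed_points g S) \<or> 2 \<le> card (cycles_of g S)"
  obtains t where "t permutes S" "\<not> evenperm t" "t \<circ> g = g \<circ> t"
proof (cases "2 \<le> card (fixed_points g S)")
  case True
  then obtain x where x: "x \<in> fixed_points g S" by fastforce
  obtain y where y: "y \<in> fixed_points g S" "y \<noteq> x" using card_ge_2_obtain_other[OF True] .
  have "transpose x y permutes S"
    using x y(1) by (intro permutes_swap_id) (auto simp: fixed_points_def)
  moreover have "\<not> evenperm (transpose x y)" using y(2) by (simp add: evenperm_swap)
  moreover have "transpose x y \<circ> g = g \<circ> transpose x y"
    using x y(1) transpose_fixed_points_commute by (simp add: fixed_points_def)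
  ultimately show ?thesis using that by blast
next
  case False
  then have two: "2 \<le> card (cycles_of g S)" using assms(2) by simp
  then obtain C where C: "C \<in> cycles_of g S" by fastforce
  obtain D where D: "D \<in> cycles_of g S" "D \<noteq> C" using card_ge_2_obtain_other[OF two] .
  obtain a where a: "a \<in> S" "g a \<noteq> a" "C = orbit g a" using C by (rule cycles_ofE)
  obtain b where b: "b \<in> S" "g b \<noteq> b" "D = orbit g b" using D(1) by (rule cycles_ofE)
  have "b \<notin> orbit g a" using orbit_eq_if_mem a(3) b(3) D(2) by blast
  then show ?thesis
    using commute_orbit_swap[OF a(1) b(1) a(2) b(2)] assms(1) that by metis
qed

lemma obtain_distinct_cycles:
  assumes "q \<le> card (cycles_of g S)"
  obtains a where "\<And>i. i < q \<Longrightarrow> a i \<in> S \<and> g (a i) \<noteq> a i"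
    "inj_on (\<lambda>i. orbit g (a i)) {..<q}"
proof -
  obtain T where T: "T \<subseteq> cycles_of g S" "card T = q" "finite T"
    using obtain_subset_with_card_n[OF assms] .
  obtain e where e: "bij_betw e {..<q} T"
    using ex_bij_betw_nat_finite[OF T(3)] T(2) by (auto simp: atLeast0LessThan)
  define a where "a i = (SOME x. x \<in> S \<and> g x \<noteq> x \<and> e i = orbit g x)" for i
  have a: "a i \<in> S \<and> g (a i) \<noteq> a i \<and> e i = orbit g (a i)" if "i < q" for i
  proof -
    have "e i \<in> cycles_of g S" using bij_betwE[OF e] T(1) that by blast
    then obtain x where "x \<in> S" "g x \<noteq> x" "e i = orbit g x" by (rule cycles_ofE)
    then have "x \<in> S \<and> g x \<noteq> x \<and> e i = orbit g x" by blast
    then show ?thesis unfolding a_def by (rule someI)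
  qed
  show ?thesis
  proof (rule that)
    show "a i \<in> S \<and> g (a i) \<noteq> a i" if "i < q" for i using a[OF that] by blast
    show "inj_on (\<lambda>i. orbit g (a i)) {..<q}"
      using bij_betw_imp_inj_on[OF e] a by (simp add: inj_on_def)
  qed
qed

lemma bij_betw_orbit_grid:
  assumes "\<And>i. i < q \<Longrightarrow> g (a i) \<noteq> a i" "inj_on (\<lambda>i. orbit g (a i)) {..<q}"
  shows "bij_betw (\<lambda>(i, j). (g ^^ j) (a i)) ({..<q} \<times> {..<p}) (\<Union>i<q. orbit g (a i))"
proof -
  have "inj_on (\<lambda>(i, j). (g ^^ j) (a i)) ({..<q} \<times> {..<p})"
  proof (rule inj_onI, clarify)
    fix i j i' j' assume ij: "i < q" "j < p" "i' < q" "j' < p" "(g ^^ j) (a i) = (g ^^ j') (a i')"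
    have "(g ^^ j) (a i) \<in> orbit g (a i')" using funpow_in_orbit_self[of j' "a i'"] ij(5) by simp
    then have "orbit g (a i') = orbit g ((g ^^ j) (a i))" by (rule orbit_eq_if_mem[symmetric])
    also have "\<dots> = orbit g (a i)" by (rule orbit_eq_if_mem[OF funpow_in_orbit_self])
    finally have "orbit g (a i) = orbit g (a i')" ..
    then have "i = i'" using inj_onD[OF assms(2)] ij(1,3) by simp
    moreover have "j = j'"
      using inj_onD[OF inj_on_funpow[OF assms(1)[OF ij(1)]]] ij \<open>i = i'\<close> by simp
    ultimately show "i = i' \<and> j = j'" ..
  qed
  moreover have "(\<lambda>(i, j). (g ^^ j) (a i)) ` ({..<q} \<times> {..<p}) = (\<Union>i<q. orbit g (a i))"
    unfolding orbit_eq_image by auto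
  ultimately show ?thesis by (simp add: bij_betw_def)
qed

lemma transpose_cycles:
  assumes "\<And>i. i < p \<Longrightarrow> a i \<in> S \<and> g (a i) \<noteq> a i" "inj_on (\<lambda>i. orbit g (a i)) {..<p}"
  obtains c where "c permutes S" "\<And>i. i < p \<Longrightarrow> c ` orbit g (a i) = (\<lambda>j. (g ^^ i) (a j)) ` {..<p}"
    "\<And>x. x \<notin> (\<Union>i<p. orbit g (a i)) \<Longrightarrow> c x = x"
proof -
  let ?grid = "\<lambda>(i, j). (g ^^ j) (a i)" and ?U = "\<Union>i<p. orbit g (a i)"
  have "bij_betw ?grid ({..<p} \<times> {..<p}) ?U" using assms by (intro bij_betw_orbit_grid) auto
  moreover have "?U \<subseteq> S" using assms(1) orbit_subset by blast
  ultimately obtain c where c: "c permutes S"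
    "\<And>i j. i < p \<Longrightarrow> j < p \<Longrightarrow> c (?grid (i, j)) = ?grid (j, i)" "\<And>x. x \<notin> ?U \<Longrightarrow> c x = x"
    by (rule transpose_grid_permutation) (rule that)
  have "c ` orbit g (a i) = (\<lambda>j. (g ^^ i) (a j)) ` {..<p}" if "i < p" for i
    unfolding orbit_eq_image image_image using c(2) that by simp
  with c(1) show ?thesis using c(3) by (rule that)
qed

end

section \<open>Conjugacy of permutations of prime order\<close>

lemma bij_betw_case_sum:
  assumes "bij_betw f A C" "bij_betw h B D" "C \<inter> D = {}"
  shows "bij_betw (case_sum f h) (A <+> B) (C \<union> D)"
proof -
  have "bij_betw (case_sum f h) (Inl ` A) C" "bij_betw (case_sum f h) (Inr ` B) D"
    using assms(1,2) by (auto simp: bij_betw_def inj_on_def image_image)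
  then show ?thesis unfolding Plus_def using assms(3) by (rule bij_betw_combine)
qed

lemma conjugate_if_common_model:
  assumes "g permutes S" "h permutes S" "\<sigma> ` M \<subseteq> M"
    and "bij_betw \<beta> M S" "\<And>y. y \<in> M \<Longrightarrow> \<beta> (\<sigma> y) = g (\<beta> y)"
    and "bij_betw \<gamma> M S" "\<And>y. y \<in> M \<Longrightarrow> \<gamma> (\<sigma> y) = h (\<gamma> y)"
  obtains c where "c permutes S" "c \<circ> g = h \<circ> c"
proof
  define c where "c x = (if x \<in> S then \<gamma> (inv_into M \<beta> x) else x)" for x
  have "bij_betw (\<gamma> \<circ> inv_into M \<beta>) S S"
    by (rule bij_betw_trans[OF bij_betw_inv_into[OF assms(4)] assms(6)])
  then have "bij_betw c S S"
    by (rule bij_betw_cong[THEN iffD1, rotated]) (simp add: c_def)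
  then show "c permutes S"
    by (rule bij_imp_permutes) (simp add: c_def)
  show "c \<circ> g = h \<circ> c"
  proof
    fix x
    show "(c \<circ> g) x = (h \<circ> c) x"
    proof (cases "x \<in> S")
      case True
      define y where "y = inv_into M \<beta> x"
      have y: "y \<in> M" "\<beta> y = x"
        unfolding y_def using bij_betwE[OF bij_betw_inv_into[OF assms(4)]] True
        bij_betw_inv_into_right[OF assms(4) True] by blast+
      have "g x = \<beta> (\<sigma> y)" using assms(5)[OF y(1)] y(2) by simp
      moreover have "\<sigma> y \<in> M" using assms(3) y(1) by blast
      ultimately have "inv_into M \<beta> (g x) = \<sigma> y"
        using inv_into_f_f[OF bij_betw_imp_inj_on[OF assms(4)]] by simp
      moreover have "g x \<in> S" using True by (simp add: permutes_in_image[OF assms(1)])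
      ultimately show ?thesis using assms(7)[OF y(1)] True by (simp add: c_def flip: y_def)
    next
      case False
      then show ?thesis using assms(1,2) by (simp add: c_def permutes_not_in)
    qed
  qed
qed

lemma transported_perm:
  assumes "bij_betw \<beta> M S" "finite S" "0 < p"
    and "\<And>y. y \<in> M \<Longrightarrow> \<sigma> y \<in> M" "\<And>y. y \<in> M \<Longrightarrow> (\<sigma> ^^ p) y = y"
  obtains g where "g permutes S" "g ^^ p = id" "\<And>y. y \<in> M \<Longrightarrow> g (\<beta> y) = \<beta> (\<sigma> y)"
proof -
  define g where "g x = (if x \<in> S then \<beta> (\<sigma> (inv_into M \<beta> x)) else x)" for x
  have S_eq: "S = \<beta> ` M" using assms(1) by (simp add: bij_betw_def)
  have g_\<beta>: "g (\<beta> y) = \<beta> (\<sigma> y)" if "y \<in> M" for y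
    using that assms(1) by (simp add: g_def bij_betw_inv_into_left S_eq)
  have "(\<sigma> ^^ i) y \<in> M" if "y \<in> M" for i y
    by (induction i) (simp_all add: assms(4) that)
  then have funpow_g: "(g ^^ i) (\<beta> y) = \<beta> ((\<sigma> ^^ i) y)" if "y \<in> M" for i y
    by (induction i) (simp_all add: g_\<beta> that)
  have g_order: "g ^^ p = id"
  proof
    fix x
    show "(g ^^ p) x = id x"
    proof (cases "x \<in> S")
      case True
      then obtain y where "y \<in> M" "x = \<beta> y" using S_eq by blast
      then show ?thesis using funpow_g assms(5) by simp
    qed (simp add: g_def funpow_fixpoint)
  qed
  have "g permutes S"
  proof (rule inj_imp_permutes[OF _ assms(2)])
    have "(g ^^ (p - 1)) (g x) = x" for x
      using g_order assms(3) funpow_Suc_right[of "p - 1" g] by (simp add: fun_eq_iff)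
    then show "inj_on g S" by (rule inj_on_inverseI)
    show "g x \<in> S" if "x \<in> S" for x using that S_eq g_\<beta> assms(4) by auto
  qed (simp add: g_def)
  then show ?thesis using that g_order g_\<beta> by blast
qed

(* The model permutation of cycle type 1^f p^c: the points Inl i are fixed, and Inr (j, s) is
   the s-th point of the j-th p-cycle. *)

definition model_points :: "nat \<Rightarrow> nat \<Rightarrow> nat \<Rightarrow> (nat + nat \<times> nat) set" where
  "model_points f c p = {..<f} <+> {..<c} \<times> {..<p}"

fun model_perm :: "nat \<Rightarrow> nat + nat \<times> nat \<Rightarrow> nat + nat \<times> nat" where
  "model_perm p (Inl i) = Inl i"
| "model_perm p (Inr (j, s)) = Inr (j, Suc s mod p)"

lemma card_model_points: "card (model_points f c p) = f + p * c"
  unfolding model_points_def by (simp add: card_Plus card_cartesian_product)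

lemma model_perm_in: "0 < p \<Longrightarrow> y \<in> model_points f c p \<Longrightarrow> model_perm p y \<in> model_points f c p"
  unfolding model_points_def by auto

lemma funpow_model_perm_Inr:
  "s < p \<Longrightarrow> (model_perm p ^^ i) (Inr (j, s)) = Inr (j, (s + i) mod p)"
  by (induction i) (simp_all add: mod_Suc_eq)

lemma funpow_model_perm_order:
  assumes "y \<in> model_points f c p" shows "(model_perm p ^^ p) y = y"
proof (cases y)
  case (Inl i)
  then show ?thesis by (simp add: funpow_fixpoint)
next
  case (Inr js)
  then show ?thesis using assms funpow_model_perm_Inr[of "snd js" p p "fst js"]
    by (auto simp: model_points_def)
qed

lemma model_perm_fixed_iff:
  assumes "1 < p" "y \<in> model_points f c p"
  shows "model_perm p y = y \<longleftrightarrow> y \<in> Inl ` {..<f}"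
proof (cases y)
  case (Inr js)
  obtain j s where "js = (j, s)" "s < p" using assms(2) Inr by (auto simp: model_points_def)
  moreover have "Suc s mod p \<noteq> s"
    using \<open>s < p\<close> assms(1) by (cases "Suc s = p") auto
  ultimately show ?thesis using Inr by auto
qed (use assms in \<open>auto simp: model_points_def\<close>)

context prime_order_perm
begin

lemma model_conjugation:
  obtains \<beta> where "bij_betw \<beta> (model_points (card (fixed_points g S)) (card (cycles_of g S)) p) S"
    "\<And>y. y \<in> model_points (card (fixed_points g S)) (card (cycles_of g S)) p \<Longrightarrow>
      \<beta> (model_perm p y) = g (\<beta> y)"
proof -
  let ?F = "fixed_points g S" and ?q = "card (cycles_of g S)"
  let ?M = "model_points (card ?F) ?q p"
  obtain e where e: "bij_betw e {..<card ?F} ?F"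
    using ex_bij_betw_nat_finite[OF finite_fixed_points] by (auto simp: atLeast0LessThan)
  obtain a where a: "\<And>j. j < ?q \<Longrightarrow> a j \<in> S \<and> g (a j) \<noteq> a j"
    and distinct: "inj_on (\<lambda>j. orbit g (a j)) {..<?q}"
    using obtain_distinct_cycles by blast
  define U where "U = (\<Union>j<?q. orbit g (a j))"
  define \<beta> where "\<beta> = case_sum e (\<lambda>(j, s). (g ^^ s) (a j))"
  have "U \<subseteq> \<Union>(cycles_of g S)" unfolding U_def using a orbit_in_cycles_of by blast
  then have "?F \<inter> U = {}" using fixed_points_disjoint_cycles by blast
  moreover have "bij_betw (\<lambda>(j, s). (g ^^ s) (a j)) ({..<?q} \<times> {..<p}) U"
    unfolding U_def using a distinct by (intro bij_betw_orbit_grid) auto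
  ultimately have bij: "bij_betw \<beta> ?M (?F \<union> U)"
    unfolding \<beta>_def model_points_def using e by (intro bij_betw_case_sum)
  have "?F \<union> U \<subseteq> S" unfolding U_def fixed_points_def using a orbit_subset by blast
  moreover have "card (?F \<union> U) = card S"
    using bij_betw_same_card[OF bij] card_model_points card_eq_fixed_points_cycles by simp
  ultimately have "?F \<union> U = S" using card_subset_eq[OF finite_S] by blast
  moreover have "\<beta> (model_perm p y) = g (\<beta> y)" if "y \<in> ?M" for y
  proof (cases y)
    case (Inl i)
    then have "\<beta> y \<in> ?F" using that bij_betwE[OF e] by (auto simp: \<beta>_def model_points_def)
    then show ?thesis using Inl by (simp add: \<beta>_def fixed_points_def)
  next
    case (Inr js)
    then show ?thesis using funpow_mod_order by (cases js) (simp add: \<beta>_def)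
  qed
  ultimately show ?thesis using that bij by simp
qed

lemma conjugate_if_same_counts:
  assumes h: "prime_order_perm h p S"
    and "card (fixed_points h S) = card (fixed_points g S)"
    and "card (cycles_of h S) = card (cycles_of g S)"
  obtains c where "c permutes S" "c \<circ> g = h \<circ> c"
proof -
  let ?M = "model_points (card (fixed_points g S)) (card (cycles_of g S)) p"
  have M: "model_perm p ` ?M \<subseteq> ?M" using model_perm_in p_gt_1 by auto
  obtain \<beta> where \<beta>: "bij_betw \<beta> ?M S" "\<And>y. y \<in> ?M \<Longrightarrow> \<beta> (model_perm p y) = g (\<beta> y)"
    using model_conjugation by blast
  obtain \<gamma> where \<gamma>: "bij_betw \<gamma> ?M S" "\<And>y. y \<in> ?M \<Longrightarrow> \<gamma> (model_perm p y) = h (\<gamma> y)"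
    using prime_order_perm.model_conjugation[OF h] unfolding assms(2,3) by blast
  show ?thesis
    using conjugate_if_common_model[OF g_permutes prime_order_perm.g_permutes[OF h] M \<beta>(1) _ \<gamma>(1)]
      \<beta>(2) \<gamma>(2) that by blast
qed

lemma prime_order_if_same_cycle_type:
  assumes "h permutes S" "cycle_type h S = cycle_type g S"
  shows "prime_order_perm h p S"
proof
  show "h permutes S" "finite S" "prime p" by (fact assms(1) finite_S prime_p)+
  have "(h ^^ p) x = x" for x
  proof (cases "x \<in> S")
    case True
    have "{orbit h y | y. y \<in> S} = orbit h ` S" by blast
    then have "card (orbit h x) \<in># cycle_type h S"
      using True finite_S by (simp add: cycle_type_def)
    then have card: "card (orbit h x) = 1 \<or> card (orbit h x) = p"
      using assms(2) cycle_type_eq by (auto split: if_splits)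
    have pow: "(h ^^ card (orbit h x)) x = x"
      by (rule funpow_card_orbit[OF permutes_imp_permutation[OF finite_S assms(1)]])
    show ?thesis
    proof (cases "card (orbit h x) = p")
      case False
      then have "h x = x" using card pow by simp
      then show ?thesis by (rule funpow_fixpoint)
    qed (use pow in simp)
  next
    case False
    then show ?thesis using assms(1) by (simp add: funpow_fixpoint permutes_not_in)
  qed
  then show "h ^^ p = id" by (simp add: fun_eq_iff)
qed

lemma conjugate_if_same_cycle_type:
  assumes "h permutes S" "cycle_type h S = cycle_type g S"
  obtains c where "c permutes S" "c \<circ> g = h \<circ> c"
proof -
  interpret h: prime_order_perm h p S
    using prime_order_if_same_cycle_type[OF assms] .
  have "replicate_mset (card (fixed_points h S)) 1 + replicate_mset (card (cycles_of h S)) p =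
      replicate_mset (card (fixed_points g S)) 1 + replicate_mset (card (cycles_of g S)) p"
    (is "?Mh = ?Mg")
    using assms(2) cycle_type_eq h.cycle_type_eq by simp
  then have "count ?Mh 1 = count ?Mg 1" "count ?Mh p = count ?Mg p"
    by simp_all
  then have "card (fixed_points h S) = card (fixed_points g S)"
    and "card (cycles_of h S) = card (cycles_of g S)"
    using p_gt_1 by simp_all
  with conjugate_if_same_counts[OF h.prime_order_perm_axioms] that show ?thesis by blast
qed

lemma even_conjugate_if_same_cycle_type:
  assumes "h permutes S" "cycle_type h S = cycle_type g S" "odd p"
    and "2 \<le> card (fixed_points g S) \<or> 2 \<le> card (cycles_of g S)"
  obtains c where "c permutes S" "evenperm c" "c \<circ> g = h \<circ> c"
proof -
  obtain c where c: "c permutes S" "c \<circ> g = h \<circ> c"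
    using conjugate_if_same_cycle_type[OF assms(1,2)] .
  obtain t where t: "t permutes S" "\<not> evenperm t" "t \<circ> g = g \<circ> t"
    using odd_commuting_perm[OF assms(3,4)] .
  have "permutation c" "permutation t"
    using c(1) t(1) finite_S by (auto intro: permutes_imp_permutation)
  show ?thesis
  proof (cases "evenperm c")
    case False
    have "c \<circ> t permutes S" using t(1) c(1) by (rule permutes_compose)
    moreover have "evenperm (c \<circ> t)"
      using evenperm_comp[OF \<open>permutation c\<close> \<open>permutation t\<close>] False t(2) by simp
    moreover have "(c \<circ> t) \<circ> g = h \<circ> (c \<circ> t)"
      using c(2) t(3) by (metis comp_assoc)
    ultimately show ?thesis using that by blast
  qed (use c that in blast)
qed

end

lemma exists_prime_order_perm:
  assumes "prime p" "finite S" "card S = f + p * c"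
  obtains g where "prime_order_perm g p S" "card (fixed_points g S) = f" "card (cycles_of g S) = c"
proof -
  let ?M = "model_points f c p"
  have p: "1 < p" using assms(1) prime_gt_1_nat by blast
  have "finite ?M" by (simp add: model_points_def)
  then obtain \<beta> where \<beta>: "bij_betw \<beta> ?M S"
    using finite_same_card_bij[OF _ assms(2)] assms(3) card_model_points by metis
  have p0: "0 < p" using p by simp
  have M: "\<And>y. y \<in> ?M \<Longrightarrow> model_perm p y \<in> ?M" "\<And>y. y \<in> ?M \<Longrightarrow> (model_perm p ^^ p) y = y"
    using model_perm_in funpow_model_perm_order p0 by simp_all
  obtain g where g: "g permutes S" "g ^^ p = id"
    "\<And>y. y \<in> ?M \<Longrightarrow> g (\<beta> y) = \<beta> (model_perm p y)"
    using transported_perm[OF \<beta> assms(2) p0 M] by blast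
  interpret prime_order_perm g p S
    using g(1,2) assms(1,2) by unfold_locales
  have fixed_iff: "g (\<beta> y) = \<beta> y \<longleftrightarrow> y \<in> Inl ` {..<f}" if "y \<in> ?M" for y
    using that g(3) model_perm_fixed_iff[OF p that] M(1)[OF that]
      inj_onD[OF bij_betw_imp_inj_on[OF \<beta>]] by fastforce
  have Inl_sub: "Inl ` {..<f} \<subseteq> ?M" by (auto simp: model_points_def)
  have "fixed_points g S = \<beta> ` Inl ` {..<f}"
  proof
    show "fixed_points g S \<subseteq> \<beta> ` Inl ` {..<f}"
    proof
      fix x assume x: "x \<in> fixed_points g S"
      then obtain y where y: "y \<in> ?M" "x = \<beta> y"
        using bij_betw_imp_surj_on[OF \<beta>] by (auto simp: fixed_points_def)
      then show "x \<in> \<beta> ` Inl ` {..<f}" using x fixed_iff[OF y(1)] by (auto simp: fixed_points_def)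
    qed
    show "\<beta> ` Inl ` {..<f} \<subseteq> fixed_points g S"
      using fixed_iff Inl_sub bij_betwE[OF \<beta>] by (auto simp: fixed_points_def)
  qed
  moreover have "inj_on \<beta> (Inl ` {..<f})"
    using bij_betw_imp_inj_on[OF \<beta>] Inl_sub by (rule inj_on_subset)
  ultimately have "card (fixed_points g S) = f"
    by (simp add: card_image inj_on_def)
  moreover have "card (cycles_of g S) = c"
    using card_eq_fixed_points_cycles assms(3) calculation p by simp
  ultimately show ?thesis using that prime_order_perm_axioms by blast
qed

section \<open>Uniform partitions and the induced action\<close>

lemma set_act_comp: "set_act (f \<circ> h) P = set_act f (set_act h P)"
  unfolding set_act_def by (simp add: image_comp)

lemma set_act_funpow: "(set_act f ^^ j) P = set_act (f ^^ j) P"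
  by (induction j) (simp_all add: set_act_def image_comp)

lemma set_act_eq_if_subset:
  assumes "inj f" "finite P" "set_act f P \<subseteq> P"
  shows "set_act f P = P"
proof -
  have "inj_on (\<lambda>B. f ` B) P" using assms(1) by (auto simp: inj_on_def inj_image_eq_iff)
  then have "card (set_act f P) = card P" unfolding set_act_def by (rule card_image)
  then show ?thesis using card_subset_eq[OF assms(2,3)] by blast
qed

lemma set_act_uniform_partition:
  assumes "c permutes {1..n}" "P \<in> uniform_partitions n k m"
  shows "set_act c P \<in> uniform_partitions n k m"
proof -
  have P: "partition_on {1..n} P" "card P = m" "\<And>B. B \<in> P \<Longrightarrow> card B = k"
    using assms(2) unfolding uniform_partitions_def by auto
  have inj: "inj_on c A" for A using permutes_inj[OF assms(1)] by (rule inj_on_subset) simp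
  have "partition_on (c ` {1..n}) ((`) c ` P - {{}})"
    by (rule partition_on_inj_image[OF P(1) inj])
  moreover have "(`) c ` P - {{}} = set_act c P"
    unfolding set_act_def using partition_onD3[OF P(1)] by auto
  moreover have "inj_on ((`) c) P"
    using permutes_inj[OF assms(1)] by (auto simp: inj_on_def inj_image_eq_iff)
  ultimately show ?thesis
    using P permutes_image[OF assms(1)] card_image[OF inj]
    by (simp add: uniform_partitions_def set_act_def card_image)
qed

locale uniform_partition =
  fixes n k m :: nat and P :: "nat set set"
  assumes mem: "P \<in> uniform_partitions n k m" and k_gt_1: "1 < k"
begin

lemma partition_on: "partition_on {1..n} P"
  using mem unfolding uniform_partitions_def by blast

lemma card_eq: "card P = m"
  using mem unfolding uniform_partitions_def by blast

lemma card_block: "B \<in> P \<Longrightarrow> card B = k"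
  using mem unfolding uniform_partitions_def by blast

lemma finite_block: "B \<in> P \<Longrightarrow> finite B"
  using card_block k_gt_1 card.infinite by fastforce

lemma block_subset: "B \<in> P \<Longrightarrow> B \<subseteq> {1..n}"
  using partition_onD1[OF partition_on] by blast

lemma block_eq: "B \<in> P \<Longrightarrow> B' \<in> P \<Longrightarrow> x \<in> B \<Longrightarrow> x \<in> B' \<Longrightarrow> B = B'"
  using partition_onD2[OF partition_on] unfolding disjoint_def by blast

lemma block_cover: assumes "x \<in> {1..n}" obtains B where "B \<in> P" "x \<in> B"
  using partition_onD1[OF partition_on] assms by blast

lemma block_other: assumes "B \<in> P" obtains y where "y \<in> B" "y \<noteq> x"
proof -
  have "2 \<le> card B" using card_block[OF assms] k_gt_1 by simp
  then show ?thesis using that by (rule card_ge_2_obtain_other)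
qed

lemma block_nonempty: assumes "B \<in> P" obtains x where "x \<in> B"
  using block_other[OF assms] by metis

lemma finite_partition: "0 < m \<Longrightarrow> finite P"
  using card_eq card.infinite by force

end

locale prime_order_on_partitions = prime_order_perm g p "{1..n}"
  for g :: "nat \<Rightarrow> nat" and p n :: nat +
  fixes k m :: nat
  assumes n_eq: "n = k * m" and k_gt_1: "1 < k" and m_ge_2: "2 \<le> m"
begin

abbreviation "\<Omega> \<equiv> uniform_partitions n k m"

lemma uniform_partitionI: "P \<in> \<Omega> \<Longrightarrow> uniform_partition n k m P"
  using k_gt_1 by unfold_locales

lemma image_funpow: "((\<lambda>X. g ` X) ^^ j) X = (g ^^ j) ` X"
  by (induction j) (simp_all add: image_comp)

lemma fixed_partition_funpow_block:
  assumes "set_act g P = P" "B \<in> P" shows "(g ^^ j) ` B \<in> P"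
proof -
  have "set_act (g ^^ j) P = P"
    using set_act_funpow[where f=g and j=j and P=P]
      funpow_fixpoint[where f="set_act g" and x=P and n=j] assms(1) by simp
  then show ?thesis using assms(2) unfolding set_act_def by blast
qed

lemma non_invariant_block:
  assumes "P \<in> \<Omega>" "set_act g P = P" "B \<in> P" "g ` B \<noteq> B"
  shows "\<forall>x\<in>B. g x \<noteq> x" and "inj_on (orbit g) B"
proof -
  interpret P: uniform_partition n k m P using uniform_partitionI[OF assms(1)] .
  have gB: "g ` B \<in> P" using fixed_partition_funpow_block[OF assms(2,3), of 1] by simp
  show "\<forall>x\<in>B. g x \<noteq> x"
    using P.block_eq[OF gB assms(3)] assms(4) by (metis image_eqI)
  show "inj_on (orbit g) B"
  proof (rule inj_onI)
    fix z w assume zw: "z \<in> B" "w \<in> B" "orbit g z = orbit g w"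
    then obtain i where i: "i < p" "w = (g ^^ i) z"
      using self_in_orbit[of w] unfolding orbit_eq_image by auto
    show "z = w"
    proof (rule ccontr)
      assume "z \<noteq> w"
      then have "\<not> p dvd i" using i by (auto dest: dvd_imp_le)
      moreover have "((\<lambda>X. g ` X) ^^ i) B = B"
        using P.block_eq[OF fixed_partition_funpow_block[OF assms(2,3)] assms(3) _ zw(2)] i(2) zw(1)
        by (auto simp: image_funpow)
      moreover have "((\<lambda>X. g ` X) ^^ p) B = B" by (simp add: image_funpow g_order)
      ultimately have "g ` B = B"
        using prime_order_fixpoint[OF prime_p, of "\<lambda>X. g ` X" B i] by blast
      then show False using assms(4) by blast
    qed
  qed
qed

lemma quasi_semiregular_iff_unique_fixed_partition:
  "quasi_semiregular \<Omega> (set_act g) \<longleftrightarrow> (\<exists>!Q. Q \<in> \<Omega> \<and> set_act g Q = Q)"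
proof (rule quasi_semiregular_iff_unique_fixed_point[OF prime_p])
  show "set_act g ^^ p = id" by (simp add: fun_eq_iff set_act_funpow g_order set_act_def)
qed

abbreviation standard_partition :: "nat set set" where
  "standard_partition \<equiv> insert (fixed_points g {1..n}) (cycles_of g {1..n})"

lemma standard_partition_mem:
  assumes "k = p" "card (fixed_points g {1..n}) = p"
  shows "standard_partition \<in> \<Omega>"
proof -
  let ?F = "fixed_points g {1..n}" and ?C = "cycles_of g {1..n}"
  have F_ne: "?F \<noteq> {}" using assms(2) p_gt_1 by auto
  have "?F \<notin> ?C" using cycle_disjoint_fixed_points F_ne by blast
  moreover have "p * m = p * Suc (card ?C)"
    using card_eq_fixed_points_cycles assms n_eq by simp
  then have "m = Suc (card ?C)" using p_gt_1 by (metis mult_cancel_left gr_implies_not0)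
  ultimately have "card standard_partition = m" using finite_cycles by simp
  moreover have "partition_on {1..n} standard_partition"
  proof (rule partition_onI)
    show "\<Union>standard_partition = {1..n}" using fixed_points_Un_cycles by simp
    show "{} \<notin> standard_partition" using F_ne card_cycle p_gt_1 by fastforce
    show "disjnt A B" if "A \<in> standard_partition" "B \<in> standard_partition" "A \<noteq> B" for A B
      using that disjoint_cycles cycle_disjoint_fixed_points
      by (auto simp: disjnt_def pairwise_def)
  qed
  ultimately show ?thesis using assms card_cycle by (auto simp: uniform_partitions_def)
qed

lemma standard_partition_fixed: "set_act g standard_partition = standard_partition"
proof -
  have "g ` fixed_points g {1..n} = fixed_points g {1..n}"
    by (rule image_eq_self_if_fixed) (simp add: fixed_points_def)
  then show ?thesis using image_cycle by (simp add: set_act_def)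
qed

lemma fixed_partition_block_standard:
  assumes "k = p" "card (fixed_points g {1..n}) = p" "card (cycles_of g {1..n}) < p"
    and Q: "Q \<in> \<Omega>" "set_act g Q = Q" and B: "B \<in> Q"
  shows "B \<in> standard_partition"
proof -
  interpret Q: uniform_partition n k m Q using uniform_partitionI[OF Q(1)] .
  have invariant: "g ` B = B"
  proof (rule ccontr)
    assume "g ` B \<noteq> B"
    note non_inv = non_invariant_block[OF Q B this]
    have "orbit g ` B \<subseteq> cycles_of g {1..n}"
      using non_inv(1) Q.block_subset[OF B] orbit_in_cycles_of by blast
    then have "card B \<le> card (cycles_of g {1..n})"
      using card_inj_on_le[OF non_inv(2) _ finite_cycles] by blast
    then show False using Q.card_block[OF B] assms(1,3) by simp
  qed
  show ?thesis
  proof (cases "\<exists>x\<in>B. g x \<noteq> x")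
    case True
    then obtain x where x: "x \<in> B" "g x \<noteq> x" by blast
    have "orbit g x = B"
      using card_subset_eq[OF Q.finite_block[OF B] orbit_subset_if_invariant[OF invariant x(1)]]
        card_orbit[OF x(2)] Q.card_block[OF B] assms(1) by simp
    then show ?thesis using orbit_in_cycles_of x Q.block_subset[OF B] by auto
  next
    case False
    then have "B \<subseteq> fixed_points g {1..n}"
      using Q.block_subset[OF B] by (auto simp: fixed_points_def)
    then have "B = fixed_points g {1..n}"
      using card_subset_eq[OF finite_fixed_points] Q.card_block[OF B] assms(1,2) by simp
    then show ?thesis by simp
  qed
qed

lemma standard_partition_unique:
  assumes "k = p" "card (fixed_points g {1..n}) = p" "card (cycles_of g {1..n}) < p"
  shows "\<exists>!Q. Q \<in> \<Omega> \<and> set_act g Q = Q"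
proof (rule ex1I)
  show "standard_partition \<in> \<Omega> \<and> set_act g standard_partition = standard_partition"
    using standard_partition_mem[OF assms(1,2)] standard_partition_fixed ..
  fix Q assume "Q \<in> \<Omega> \<and> set_act g Q = Q"
  then have Q: "Q \<in> \<Omega>" "set_act g Q = Q" by blast+
  have "finite standard_partition" using finite_cycles by simp
  moreover have "Q \<subseteq> standard_partition" using fixed_partition_block_standard[OF assms Q] by blast
  moreover have "card Q = card standard_partition"
    using uniform_partition.card_eq[OF uniform_partitionI[OF Q(1)]]
      uniform_partition.card_eq[OF uniform_partitionI[OF standard_partition_mem[OF assms(1,2)]]]
    by simp
  ultimately show "Q = standard_partition" by (rule card_subset_eq)
qed

end

section \<open>The unique invariant partition\<close>

locale unique_fixed_partition = prime_order_on_partitions +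
  fixes \<Gamma> :: "nat set set"
  assumes \<Gamma>_mem: "\<Gamma> \<in> \<Omega>" and \<Gamma>_fixed: "set_act g \<Gamma> = \<Gamma>"
    and \<Gamma>_unique: "\<And>Q. Q \<in> \<Omega> \<Longrightarrow> set_act g Q = Q \<Longrightarrow> Q = \<Gamma>"
begin

sublocale \<Gamma>: uniform_partition n k m \<Gamma>
  using uniform_partitionI[OF \<Gamma>_mem] .

lemma relabelling_eq_if_fixed:
  assumes "c permutes {1..n}" "\<And>A. A \<in> \<Gamma> \<Longrightarrow> g ` c ` A \<in> set_act c \<Gamma>"
  shows "set_act c \<Gamma> = \<Gamma>"
proof (rule \<Gamma>_unique)
  show "set_act c \<Gamma> \<in> \<Omega>" using assms(1) \<Gamma>_mem by (rule set_act_uniform_partition)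
  have "finite (set_act c \<Gamma>)" using \<Gamma>.finite_partition m_ge_2 by (simp add: set_act_def)
  moreover have "set_act g (set_act c \<Gamma>) \<subseteq> set_act c \<Gamma>"
    using assms(2) by (auto simp: set_act_def)
  ultimately show "set_act g (set_act c \<Gamma>) = set_act c \<Gamma>"
    by (rule set_act_eq_if_subset[OF inj_g])
qed

lemma commuting_perm_block:
  assumes "c permutes {1..n}" "c \<circ> g = g \<circ> c" "B \<in> \<Gamma>"
  shows "c ` B \<in> \<Gamma>"
proof -
  have "set_act g (set_act c \<Gamma>) = set_act c (set_act g \<Gamma>)"
    by (simp only: set_act_comp[symmetric] assms(2))
  then have "set_act c \<Gamma> = \<Gamma>"
    using \<Gamma>_unique[OF set_act_uniform_partition[OF assms(1) \<Gamma>_mem]] \<Gamma>_fixed by simp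
  then show ?thesis using assms(3) unfolding set_act_def by blast
qed

lemma block_invariant: assumes B: "B \<in> \<Gamma>" shows "g ` B = B"
proof (rule ccontr)
  assume ne: "g ` B \<noteq> B"
  note non_inv = non_invariant_block[OF \<Gamma>_mem \<Gamma>_fixed B ne]
  obtain z where z: "z \<in> B" by (rule \<Gamma>.block_nonempty[OF B])
  obtain w where w: "w \<in> B" "w \<noteq> z" by (rule \<Gamma>.block_other[OF B])
  have w_notin: "w \<notin> orbit g z"
    using inj_onD[OF non_inv(2) orbit_eq_if_mem w(1) z] w(2) by blast
  have "z \<in> {1..n}" using \<Gamma>.block_subset[OF B] z by blast
  then obtain c where c: "c permutes {1..n}" "c \<circ> g = g \<circ> c" "c z = g z"
    "\<And>y. y \<notin> orbit g z \<Longrightarrow> c y = y"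
    using commute_orbit_rotation by blast
  have cB: "c ` B \<in> \<Gamma>" using c(1,2) B by (rule commuting_perm_block)
  have "w \<in> c ` B" using c(4)[OF w_notin] w(1) by force
  then have "c ` B = B" using \<Gamma>.block_eq[OF cB B _ w(1)] by blast
  then have "g z \<in> B" using c(3) z by force
  moreover have "g ` B \<in> \<Gamma>" using fixed_partition_funpow_block[OF \<Gamma>_fixed B, of 1] by simp
  ultimately have "g ` B = B" using \<Gamma>.block_eq[OF _ B] z by blast
  then show False using ne by blast
qed

lemma orbit_subset_block: "B \<in> \<Gamma> \<Longrightarrow> x \<in> B \<Longrightarrow> orbit g x \<subseteq> B"
  by (rule orbit_subset_if_invariant[OF block_invariant])

lemma fixed_points_same_block:
  assumes "x \<in> fixed_points g {1..n}" "y \<in> fixed_points g {1..n}" "B \<in> \<Gamma>" "x \<in> B"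
  shows "y \<in> B"
proof (rule ccontr)
  assume y_notin: "y \<notin> B"
  have x: "x \<in> {1..n}" "g x = x" and y: "y \<in> {1..n}" "g y = y"
    using assms(1,2) by (simp_all add: fixed_points_def)
  let ?t = "transpose x y"
  have tB: "?t ` B \<in> \<Gamma>"
    using permutes_swap_id[OF x(1) y(1)] transpose_fixed_points_commute[OF x(2) y(2)] assms(3)
    by (rule commuting_perm_block)
  obtain w where w: "w \<in> B" "w \<noteq> x" by (rule \<Gamma>.block_other[OF assms(3)])
  have "w \<noteq> y" using w(1) y_notin by blast
  then have "?t w = w" using w(2) by (simp add: transpose_apply_other)
  then have "w \<in> ?t ` B" using w(1) by force
  then have "?t ` B = B" using \<Gamma>.block_eq[OF tB assms(3) _ w(1)] by blast
  moreover have "y \<in> ?t ` B" using assms(4) by force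
  ultimately show False using y_notin by simp
qed

lemma block_eq_orbit:
  assumes "B \<in> \<Gamma>" "B' \<in> \<Gamma>" "B \<noteq> B'" "a \<in> B" "b \<in> B'" "g a \<noteq> a" "g b \<noteq> b"
  shows "B = orbit g a"
proof -
  have disj: "B \<inter> B' = {}" using \<Gamma>.block_eq assms(1-3) by blast
  have sub: "orbit g a \<subseteq> B" "orbit g b \<subseteq> B'"
    using orbit_subset_block assms(1,2,4,5) by blast+
  have "b \<notin> orbit g a" using sub(1) disj assms(5) by blast
  moreover have "a \<in> {1..n}" "b \<in> {1..n}" using \<Gamma>.block_subset assms(1,2,4,5) by blast+
  ultimately obtain c where c: "c permutes {1..n}" "c \<circ> g = g \<circ> c" "c ` orbit g a = orbit g b"
    "\<And>x. x \<notin> orbit g a \<Longrightarrow> x \<notin> orbit g b \<Longrightarrow> c x = x" "odd p \<Longrightarrow> \<not> evenperm c"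
    using commute_orbit_swap assms(6,7) by metis
  have cB: "c ` B \<in> \<Gamma>" using c(1,2) assms(1) by (rule commuting_perm_block)
  have "b \<in> c ` B" using c(3) sub(1) self_in_orbit[of b] by blast
  then have cB_eq: "c ` B = B'" using \<Gamma>.block_eq[OF cB assms(2) _ assms(5)] by blast
  have "x \<in> orbit g a" if x: "x \<in> B" for x
  proof (rule ccontr)
    assume "x \<notin> orbit g a"
    moreover have "x \<notin> orbit g b" using x sub(2) disj by blast
    ultimately have "c x = x" by (rule c(4))
    then have "x \<in> B'" using x cB_eq by force
    then show False using x disj by blast
  qed
  then show ?thesis using sub(1) by blast
qed

(* If p cycles are blocks, transposing the p x p array formed by their points yields p
   "columns" that g permutes cyclically, and hence a second g-invariant partition. *)
lemma card_cycles_less: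
  assumes "cycles_of g {1..n} \<subseteq> \<Gamma>" shows "card (cycles_of g {1..n}) < p"
proof (rule ccontr)
  assume "\<not> card (cycles_of g {1..n}) < p"
  then have "p \<le> card (cycles_of g {1..n})" by simp
  then obtain a where a: "\<And>i. i < p \<Longrightarrow> a i \<in> {1..n} \<and> g (a i) \<noteq> a i"
    and distinct: "inj_on (\<lambda>i. orbit g (a i)) {..<p}"
    using obtain_distinct_cycles by blast
  define row where "row i = orbit g (a i)" for i
  define col where "col j = (\<lambda>i. (g ^^ j) (a i)) ` {..<p}" for j
  obtain c where c: "c permutes {1..n}"
    "\<And>i. i < p \<Longrightarrow> c ` orbit g (a i) = (\<lambda>j. (g ^^ i) (a j)) ` {..<p}"
    "\<And>x. x \<notin> (\<Union>i<p. orbit g (a i)) \<Longrightarrow> c x = x"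
    using transpose_cycles[OF a distinct] by metis
  then have c_row: "c ` row i = col i" if "i < p" for i
    using that by (simp add: row_def col_def)
  have row_block: "row i \<in> \<Gamma>" if "i < p" for i
    using assms orbit_in_cycles_of a[OF that] unfolding row_def by blast
  have g_col: "g ` col j = col (Suc j mod p)" for j
    unfolding col_def image_image by (simp add: funpow_mod_order)
  have "set_act c \<Gamma> = \<Gamma>"
  proof (rule relabelling_eq_if_fixed[OF c(1)])
    fix A assume A: "A \<in> \<Gamma>"
    show "g ` c ` A \<in> set_act c \<Gamma>"
    proof (cases "\<exists>i<p. A = row i")
      case True
      then obtain i where "i < p" "A = row i" by blast
      then have "g ` c ` A = c ` row (Suc i mod p)" using c_row g_col p_gt_1 by simp
      then show ?thesis using row_block[of "Suc i mod p"] p_gt_1 by (simp add: set_act_def)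
    next
      case False
      then have "A \<inter> (\<Union>i<p. orbit g (a i)) = {}"
        using \<Gamma>.block_eq[OF A row_block] unfolding row_def by blast
      then have "c ` A = A" using c(3) by (intro image_eq_self_if_fixed) blast
      then show ?thesis using block_invariant[OF A] A unfolding set_act_def by (metis image_eqI)
    qed
  qed
  moreover have "c ` row 0 \<in> set_act c \<Gamma>" using row_block[of 0] p_gt_1 by (simp add: set_act_def)
  ultimately have col0: "col 0 \<in> \<Gamma>" using c_row[of 0] p_gt_1 by simp
  have "a 0 \<in> col 0" "a 1 \<in> col 0" using p_gt_1 by (auto simp: col_def)
  moreover have "a 0 \<in> row 0" "a 1 \<in> row 1" by (simp_all add: row_def self_in_orbit)
  ultimately have "col 0 = row 0" "col 0 = row 1"
    using \<Gamma>.block_eq[OF col0 row_block] p_gt_1 by blast+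
  then show False using inj_onD[OF distinct, of 0 1] p_gt_1 by (simp add: row_def)
qed

lemma fixed_points_block:
  assumes "fixed_points g {1..n} \<noteq> {}" shows "fixed_points g {1..n} \<in> \<Gamma>"
proof -
  let ?F = "fixed_points g {1..n}"
  obtain x0 where x0: "x0 \<in> ?F" using assms by blast
  then have "x0 \<in> {1..n}" by (simp add: fixed_points_def)
  then obtain B0 where B0: "B0 \<in> \<Gamma>" "x0 \<in> B0" by (rule \<Gamma>.block_cover)
  have F_sub: "?F \<subseteq> B0" using fixed_points_same_block[OF x0 _ B0(1,2)] by blast
  have "z \<in> ?F" if z: "z \<in> B0" for z
  proof (rule ccontr)
    assume z_nonfixed: "z \<notin> ?F"
    have "2 \<le> card \<Gamma>" using \<Gamma>.card_eq m_ge_2 by simp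
    then obtain B1 where B1: "B1 \<in> \<Gamma>" "B1 \<noteq> B0" by (rule card_ge_2_obtain_other)
    obtain y where y: "y \<in> B1" by (rule \<Gamma>.block_nonempty[OF B1(1)])
    have "y \<notin> ?F" using F_sub \<Gamma>.block_eq[OF B1(1) B0(1) y] B1(2) by blast
    then have "B0 = orbit g z"
      using block_eq_orbit[OF B0(1) B1(1) B1(2)[symmetric] z y] z_nonfixed z y
        \<Gamma>.block_subset[OF B0(1)] \<Gamma>.block_subset[OF B1(1)] by (auto simp: fixed_points_def)
    then show False
      using nonfixed_in_orbit[of z x0] B0(2) x0 z_nonfixed z \<Gamma>.block_subset[OF B0(1)]
      by (auto simp: fixed_points_def)
  qed
  then have "B0 = ?F" using F_sub by blast
  then show ?thesis using B0(1) by simp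
qed

lemma exchange_invariant_subsets:
  assumes A: "A \<in> \<Gamma>" and B: "B \<in> \<Gamma>" "A \<noteq> B"
    and sub: "P \<subseteq> A" "D \<subseteq> B" and inv: "g ` P = P" "g ` D = D" and card: "card P = card D"
  obtains c where "c ` A = (A - P) \<union> D" "set_act c \<Gamma> = \<Gamma>"
proof -
  have disj: "A \<inter> B = {}" using \<Gamma>.block_eq[OF A B(1)] B(2) by blast
  have "P \<inter> D = {}" "P \<subseteq> {1..n}" "D \<subseteq> {1..n}"
    using disj sub \<Gamma>.block_subset[OF A] \<Gamma>.block_subset[OF B(1)] by blast+
  then obtain c where c: "c permutes {1..n}" "c ` P = D" "c ` D = P"
    "\<And>y. y \<notin> P \<Longrightarrow> y \<notin> D \<Longrightarrow> c y = y"
    using exchange_permutation[OF finite_S card] by blast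
  have c_fixes: "c ` X = X" if "X \<inter> P = {}" "X \<inter> D = {}" for X
    using that c(4) by (intro image_eq_self_if_fixed) blast
  have c_A: "c ` A = (A - P) \<union> D"
  proof -
    have "c ` A = c ` (A - P) \<union> c ` P" using sub(1) by auto
    moreover have "c ` (A - P) = A - P" using sub(2) disj by (intro c_fixes) blast+
    ultimately show ?thesis using c(2) by simp
  qed
  have c_B: "c ` B = (B - D) \<union> P"
  proof -
    have "c ` B = c ` (B - D) \<union> c ` D" using sub(2) by auto
    moreover have "c ` (B - D) = B - D" using sub(1) disj by (intro c_fixes) blast+
    ultimately show ?thesis using c(3) by simp
  qed
  have g_diff: "g ` (X - Y) = X - Y" if "g ` X = X" "g ` Y = Y" for X Y
    using that by (simp add: image_set_diff[OF inj_g])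
  have "set_act c \<Gamma> = \<Gamma>"
  proof (rule relabelling_eq_if_fixed[OF c(1)])
    fix X assume X: "X \<in> \<Gamma>"
    have "g ` c ` X = c ` X"
    proof (cases "X = A \<or> X = B")
      case True
      then show ?thesis
      proof
        assume "X = A"
        then show ?thesis
          using c_A g_diff[OF block_invariant[OF A] inv(1)] inv(2) by (simp add: image_Un)
      next
        assume "X = B"
        then show ?thesis
          using c_B g_diff[OF block_invariant[OF B(1)] inv(2)] inv(1) by (simp add: image_Un)
      qed
    next
      case False
      then have "X \<inter> A = {}" "X \<inter> B = {}" using \<Gamma>.block_eq[OF X] A B(1) by blast+
      then have "c ` X = X" using sub by (intro c_fixes) blast+
      then show ?thesis using block_invariant[OF X] by simp
    qed
    then show "g ` c ` X \<in> set_act c \<Gamma>" using X unfolding set_act_def by (metis image_eqI)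
  qed
  then show ?thesis using that c_A by blast
qed

(* Otherwise exchanging p fixed points with one cycle of B gives a second invariant partition. *)
lemma block_in_cycles_if_fixed_block:
  assumes F: "fixed_points g {1..n} \<in> \<Gamma>" and B: "B \<in> \<Gamma>" "B \<noteq> fixed_points g {1..n}"
  shows "B \<in> cycles_of g {1..n}"
proof (rule ccontr)
  assume B_not_cycle: "B \<notin> cycles_of g {1..n}"
  let ?F = "fixed_points g {1..n}"
  have disj: "B \<inter> ?F = {}" using \<Gamma>.block_eq[OF B(1) F] B(2) by blast
  obtain x where x: "x \<in> B" by (rule \<Gamma>.block_nonempty[OF B(1)])
  have "x \<in> {1..n}" using x \<Gamma>.block_subset[OF B(1)] by blast
  then have xS: "x \<in> {1..n}" "g x \<noteq> x" using x disj unfolding fixed_points_def by blast+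
  let ?D = "orbit g x"
  have D_sub: "?D \<subseteq> B" using orbit_subset_block[OF B(1) x] .
  then have "?D \<subset> B" using B_not_cycle orbit_in_cycles_of[OF xS] by blast
  then have "card ?D < card B" by (rule psubset_card_mono[OF \<Gamma>.finite_block[OF B(1)]])
  then have "p < k" using card_orbit[OF xS(2)] \<Gamma>.card_block[OF B(1)] by simp
  then have "p \<le> card ?F" using \<Gamma>.card_block[OF F] by simp
  then obtain P where P: "P \<subseteq> ?F" "card P = p" "finite P" by (rule obtain_subset_with_card_n)
  have "g ` P = P" using P(1) by (intro image_eq_self_if_fixed) (auto simp: fixed_points_def)
  moreover have "card P = card ?D" using P(2) card_orbit[OF xS(2)] by simp
  ultimately obtain c where c: "c ` ?F = (?F - P) \<union> ?D" "set_act c \<Gamma> = \<Gamma>"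
    using exchange_invariant_subsets[OF F B(1) B(2)[symmetric] P(1) D_sub _ image_orbit] by blast
  then have "c ` ?F \<in> \<Gamma>" using F unfolding set_act_def by blast
  moreover have "x \<in> c ` ?F" using c(1) self_in_orbit by blast
  ultimately have "c ` ?F = B" using \<Gamma>.block_eq[OF _ B(1) _ x] by blast
  moreover have "\<not> ?F \<subseteq> P"
  proof
    assume "?F \<subseteq> P"
    then have "card ?F \<le> card P" using P(3) by (rule card_mono[rotated])
    then show False using P(2) \<open>p < k\<close> \<Gamma>.card_block[OF F] by simp
  qed
  ultimately show False using c(1) disj by blast
qed

lemma cycles_subset_if_blocks_cycles:
  assumes "\<And>B. B \<in> \<Gamma> \<Longrightarrow> B \<noteq> fixed_points g {1..n} \<Longrightarrow> B \<in> cycles_of g {1..n}"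
  shows "cycles_of g {1..n} \<subseteq> \<Gamma>"
proof
  fix C assume C: "C \<in> cycles_of g {1..n}"
  then obtain x where x: "x \<in> {1..n}" "g x \<noteq> x" "C = orbit g x" by (rule cycles_ofE)
  obtain B where B: "B \<in> \<Gamma>" "x \<in> B" using x(1) by (rule \<Gamma>.block_cover)
  have "B \<noteq> fixed_points g {1..n}" using B(2) x(2) by (auto simp: fixed_points_def)
  then have "B \<in> cycles_of g {1..n}" using assms B(1) by blast
  then have "C = B" using cycles_eq_if_common[OF C _ _ B(2)] x(3) self_in_orbit by blast
  then show "C \<in> \<Gamma>" using B(1) by simp
qed

lemma obtain_other_block: assumes "B \<in> \<Gamma>" obtains B' where "B' \<in> \<Gamma>" "B' \<noteq> B"
proof -
  have "2 \<le> card \<Gamma>" using \<Gamma>.card_eq m_ge_2 by simp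
  then show ?thesis using that by (rule card_ge_2_obtain_other)
qed

lemma classification_fixed_point_free:
  assumes "fixed_points g {1..n} = {}"
  shows "k = p" "card (cycles_of g {1..n}) = m" "m < p"
proof -
  let ?C = "cycles_of g {1..n}"
  have nonfixed: "g x \<noteq> x" if "x \<in> {1..n}" for x
    using assms that by (auto simp: fixed_points_def)
  have block_cycle: "B \<in> ?C" if B: "B \<in> \<Gamma>" for B
  proof -
    obtain a where a: "a \<in> B" by (rule \<Gamma>.block_nonempty[OF B])
    obtain B' where B': "B' \<in> \<Gamma>" "B' \<noteq> B" by (rule obtain_other_block[OF B])
    obtain b where b: "b \<in> B'" by (rule \<Gamma>.block_nonempty[OF B'(1)])
    have aS: "a \<in> {1..n}" and "b \<in> {1..n}"
      using a b \<Gamma>.block_subset B B'(1) by blast+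
    then have "B = orbit g a"
      using block_eq_orbit[OF B B'(1) B'(2)[symmetric] a b] nonfixed by blast
    then show ?thesis using orbit_in_cycles_of[OF aS nonfixed[OF aS]] by simp
  qed
  then have "\<Gamma> = ?C" using cycles_subset_if_blocks_cycles by blast
  then show "card ?C = m" using \<Gamma>.card_eq by simp
  then show "m < p" using card_cycles_less \<open>\<Gamma> = ?C\<close> by simp
  obtain B where "B \<in> \<Gamma>" using \<Gamma>.card_eq m_ge_2 by fastforce
  then show "k = p" using \<Gamma>.card_block card_cycle \<open>\<Gamma> = ?C\<close> by simp
qed

lemma classification_with_fixed_points:
  assumes "fixed_points g {1..n} \<noteq> {}"
  shows "k = p" "card (fixed_points g {1..n}) = p" "card (cycles_of g {1..n}) = m - 1" "m \<le> p"
proof -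
  let ?F = "fixed_points g {1..n}" and ?C = "cycles_of g {1..n}"
  have F: "?F \<in> \<Gamma>" using assms by (rule fixed_points_block)
  have C_sub: "?C \<subseteq> \<Gamma>" using cycles_subset_if_blocks_cycles block_in_cycles_if_fixed_block[OF F] .
  then have \<Gamma>_eq: "\<Gamma> = insert ?F ?C" using F block_in_cycles_if_fixed_block[OF F] by blast
  have "?F \<notin> ?C" using cycle_disjoint_fixed_points assms by blast
  then show C_card: "card ?C = m - 1" using \<Gamma>.card_eq finite_cycles \<Gamma>_eq by simp
  show "m \<le> p" using card_cycles_less[OF C_sub] C_card by simp
  obtain B where "B \<in> \<Gamma>" "B \<noteq> ?F" by (rule obtain_other_block[OF F])
  then show "k = p" using \<Gamma>.card_block card_cycle \<Gamma>_eq by auto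
  then show "card ?F = p" using \<Gamma>.card_block[OF F] by simp
qed

end

section \<open>Quasi-semiregular elements of prime order\<close>

lemma sym_or_alt_grpD: "G \<in> {sym_grp n, alt_grp n} \<Longrightarrow> g \<in> G \<Longrightarrow> g permutes {1..n}"
  by (auto simp: sym_grp_def alt_grp_def)

lemma sym_or_alt_grpI:
  "G \<in> {sym_grp n, alt_grp n} \<Longrightarrow> g permutes {1..n} \<Longrightarrow> evenperm g \<Longrightarrow> g \<in> G"
  by (auto simp: sym_grp_def alt_grp_def)

locale quasi_semiregular_element = prime_order_on_partitions +
  assumes n_gt_4: "4 < n" and quasi_semiregular: "quasi_semiregular \<Omega> (set_act g)"
begin

definition fixed_partition :: "nat set set" where
  "fixed_partition = (THE \<Gamma>. \<Gamma> \<in> \<Omega> \<and> set_act g \<Gamma> = \<Gamma>)"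

lemma unique_fixed_partition: "unique_fixed_partition g p n k m fixed_partition"
proof -
  have ex1: "\<exists>!\<Gamma>. \<Gamma> \<in> \<Omega> \<and> set_act g \<Gamma> = \<Gamma>"
    using quasi_semiregular quasi_semiregular_iff_unique_fixed_partition by blast
  then have "fixed_partition \<in> \<Omega> \<and> set_act g fixed_partition = fixed_partition"
    unfolding fixed_partition_def by (rule theI')
  then show ?thesis using ex1 by unfold_locales blast+
qed

sublocale unique_fixed_partition g p n k m fixed_partition
  by (rule unique_fixed_partition)

lemma cycle_counts:
  "k = p"
  "card (fixed_points g {1..n}) = p \<and> card (cycles_of g {1..n}) = m - 1 \<and> m \<le> p \<or>
   card (fixed_points g {1..n}) = 0 \<and> card (cycles_of g {1..n}) = m \<and> m < p"
  using classification_fixed_point_free classification_with_fixed_points by fastforce+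

lemma odd_p: "odd p"
proof (rule prime_odd_nat[OF prime_p])
  have "p \<noteq> 2"
  proof
    assume "p = 2"
    then have "m = 2" using cycle_counts m_ge_2 by auto
    then show False using n_eq cycle_counts(1) \<open>p = 2\<close> n_gt_4 by simp
  qed
  then show "2 < p" using prime_ge_2_nat[OF prime_p] by simp
qed

lemma in_alt_grp: "g \<in> alt_grp n"
  using g_permutes evenperm_if_odd_order[OF permutation_g g_order odd_p] by (simp add: alt_grp_def)

lemma blocks_invariant: "Q \<in> \<Omega> \<Longrightarrow> set_act g Q = Q \<Longrightarrow> B \<in> Q \<Longrightarrow> g ` B = B"
  using block_invariant \<Gamma>_unique by blast

lemma cycle_type_cases:
  "m = p \<and> cycle_type g {1..n} = replicate_mset p 1 + replicate_mset (m - 1) p \<or>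
   2 \<le> m \<and> m < p \<and> (cycle_type g {1..n} = replicate_mset p 1 + replicate_mset (m - 1) p \<or>
                      cycle_type g {1..n} = replicate_mset m p)"
  using cycle_counts(2) cycle_type_eq m_ge_2 by auto

lemma conjugate_in_group:
  assumes "G \<in> {sym_grp n, alt_grp n}" "h \<in> G" "cycle_type h {1..n} = cycle_type g {1..n}"
  shows "\<exists>c\<in>G. h = c \<circ> g \<circ> inv c"
proof -
  have "2 \<le> card (fixed_points g {1..n}) \<or> 2 \<le> card (cycles_of g {1..n})"
    using cycle_counts(2) m_ge_2 p_gt_1 by auto
  then obtain c where c: "c permutes {1..n}" "evenperm c" "c \<circ> g = h \<circ> c"
    using even_conjugate_if_same_cycle_type[OF sym_or_alt_grpD[OF assms(1,2)] assms(3) odd_p]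
    by blast
  then have "h = c \<circ> g \<circ> inv c" by (metis comp_assoc comp_id permutes_inv_o(1))
  then show ?thesis using sym_or_alt_grpI[OF assms(1) c(1,2)] by blast
qed

end

lemma quasi_semiregular_elementI:
  assumes "g permutes {1..n}" "prime p" "g ^^ p = id" "n = k * m" "1 < k" "2 \<le> m" "4 < n"
    and "quasi_semiregular (uniform_partitions n k m) (set_act g)"
  shows "quasi_semiregular_element g p n k m"
  using assms by unfold_locales simp_all

lemma exists_quasi_semiregular_element:
  assumes "prime p" "odd p" "n = p * m" "2 \<le> m" "m \<le> p"
  obtains g where "g permutes {1..n}" "evenperm g" "g ^^ p = id" "g \<noteq> id"
    "quasi_semiregular (uniform_partitions n p m) (set_act g)"
proof -
  have "card {1..n} = p + p * (m - 1)" using assms(3,4) by (simp add: algebra_simps)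
  then obtain g where "prime_order_perm g p {1..n}"
    and F: "card (fixed_points g {1..n}) = p" and C: "card (cycles_of g {1..n}) = m - 1"
    using exists_prime_order_perm[OF assms(1)] by blast
  then interpret prime_order_on_partitions g p n p m
    using assms(3,4) prime_gt_1_nat[OF assms(1)]
    by (simp add: prime_order_on_partitions_def prime_order_on_partitions_axioms_def)
  have "m - 1 < p" using assms(4,5) by simp
  then have "quasi_semiregular \<Omega> (set_act g)"
    unfolding quasi_semiregular_iff_unique_fixed_partition
    using standard_partition_unique[OF refl F] C by simp
  moreover have "g \<noteq> id"
  proof
    assume "g = id"
    then have "cycles_of g {1..n} = {}" by (simp add: cycles_of_def)
    then show False using C assms(4) by simp
  qed
  ultimately show ?thesis
    using that g_permutes evenperm_if_odd_order[OF permutation_g g_order assms(2)] g_order by blast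
qed

lemma quasi_semiregular_criterion:
  assumes "n = k * m" "1 < k" "2 \<le> m" "4 < n" "G \<in> {sym_grp n, alt_grp n}"
  shows "(\<exists>g\<in>G. prime p \<and> g ^^ p = id \<and> g \<noteq> id \<and>
      quasi_semiregular (uniform_partitions n k m) (set_act g)) \<longleftrightarrow>
    prime p \<and> odd p \<and> k = p \<and> m \<le> p"
proof
  assume "\<exists>g\<in>G. prime p \<and> g ^^ p = id \<and> g \<noteq> id \<and>
    quasi_semiregular (uniform_partitions n k m) (set_act g)"
  then obtain g where "g \<in> G" "prime p" "g ^^ p = id"
    "quasi_semiregular (uniform_partitions n k m) (set_act g)" by blast
  then interpret quasi_semiregular_element g p n k m
    using quasi_semiregular_elementI sym_or_alt_grpD[OF assms(5)] assms(1-4) by blast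
  show "prime p \<and> odd p \<and> k = p \<and> m \<le> p" using prime_p odd_p cycle_counts by auto
next
  assume p: "prime p \<and> odd p \<and> k = p \<and> m \<le> p"
  then have "n = p * m" using assms(1) by simp
  then obtain g where g: "g permutes {1..n}" "evenperm g" "g ^^ p = id" "g \<noteq> id"
    "quasi_semiregular (uniform_partitions n p m) (set_act g)"
    using exists_quasi_semiregular_element p assms(3) by blast
  then show "\<exists>g\<in>G. prime p \<and> g ^^ p = id \<and> g \<noteq> id \<and>
    quasi_semiregular (uniform_partitions n k m) (set_act g)"
    using sym_or_alt_grpI[OF assms(5) g(1,2)] p by blast
qed

theorem proposition6p4:
  fixes n k m :: nat and G :: "(nat \<Rightarrow> nat) set"
  assumes "n > 4" and "k dvd n" and "1 < k" and "2 * k \<le> n" and "n = k * m"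
    and "G \<in> {sym_grp n, alt_grp n}"
  shows "(\<forall>p::nat. (\<exists>g\<in>G. prime p \<and> g ^^ p = id \<and> g \<noteq> id \<and>
              quasi_semiregular (uniform_partitions n k m) (set_act g))
           \<longleftrightarrow> (prime p \<and> odd p \<and> k = p \<and> 2 \<le> m \<and> m \<le> p))
    \<and> (\<forall>g (p::nat) \<Gamma>. g \<in> G \<longrightarrow> prime p \<longrightarrow> g ^^ p = id \<longrightarrow> g \<noteq> id \<longrightarrow>
          quasi_semiregular (uniform_partitions n k m) (set_act g) \<longrightarrow>
          \<Gamma> \<in> uniform_partitions n k m \<longrightarrow> set_act g \<Gamma> = \<Gamma> \<longrightarrow>
          g \<in> alt_grp n \<and> (\<forall>B\<in>\<Gamma>. g ` B = B) \<and>
          (\<forall>h\<in>G. cycle_type h {1..n} = cycle_type g {1..n} \<longrightarrow>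
               (\<exists>c\<in>G. h = c \<circ> g \<circ> inv c)) \<and>
          ((m = p \<and> cycle_type g {1..n} = replicate_mset p 1 + replicate_mset (m - 1) p)
           \<or> (2 \<le> m \<and> m < p \<and>
               (cycle_type g {1..n} = replicate_mset p 1 + replicate_mset (m - 1) p
                \<or> cycle_type g {1..n} = replicate_mset m p))))"
proof -
  have m: "2 \<le> m" using assms(3-5) by simp
  have element: "quasi_semiregular_element g p n k m"
    if "g \<in> G" "prime p" "g ^^ p = id" "quasi_semiregular (uniform_partitions n k m) (set_act g)"
    for g p
    using sym_or_alt_grpD[OF assms(6) that(1)] that(2,3) assms(5,3) m assms(1) that(4)
    by (rule quasi_semiregular_elementI)
  show ?thesis
    apply (intro conjI allI impI)
    subgoal for p
      using quasi_semiregular_criterion[OF assms(5,3) m assms(1,6)] m by simp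
    subgoal for g p \<Gamma>
      using quasi_semiregular_element.in_alt_grp[OF element] by blast
    subgoal for g p \<Gamma>
      using quasi_semiregular_element.blocks_invariant[OF element] by blast
    subgoal for g p \<Gamma>
      using quasi_semiregular_element.conjugate_in_group[OF element assms(6)] by blast
    subgoal for g p \<Gamma>
      using quasi_semiregular_element.cycle_type_cases[OF element] by blast
    done
qed

end
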